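(* Let $(X,d)$ be a metric space, $p\in X$, and define $\mu_p(x,y)=d(x,y)+\sqrt{d(x,p)d(y,p)}$ for $x,y\in X$. Then for all $x,y,z,w\in X$, $$\mu_p(x,y)\mu_p(z,w)\leq 9\max\{\mu_p(x,z)\mu_p(y,w),\ \mu_p(x,w)\mu_p(y,z)\}.$$ *)

theory Defs
  imports Complex_Main
begin

definition mu :: "'a::metric_space \<Rightarrow> 'a \<Rightarrow> 'a \<Rightarrow> real" where
  "mu p x y = dist x y + sqrt (dist x p * dist y p)"

end

theory Submission
  imports Defs
begin

text \<open>Proof idea: \<open>\<mu>\<^sub>p\<close> satisfies the quasi-triangle inequality
  \<open>\<mu>\<^sub>p(x,y) \<le> 3 max {\<mu>\<^sub>p(x,z), \<mu>\<^sub>p(z,y)}\<close>. For any symmetric function with a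
  \<open>K\<close>-quasi-triangle inequality, route both factors on the left through the
  smallest of the four cross terms: each factor is then at most \<open>K\<close> times one of
  the two cross terms not paired with that smallest one.\<close>

lemma quasi_triangle_cross_product_le:
  fixes m :: "'a \<Rightarrow> 'a \<Rightarrow> real"
  assumes commute: "\<And>a b. m a b = m b a"
    and nonneg: "\<And>a b. 0 \<le> m a b"
    and quasi_triangle: "\<And>a b c. m a b \<le> K * max (m a c) (m c b)"
  shows "m x y * m z w \<le> K\<^sup>2 * max (m x z * m y w) (m x w * m y z)"
proof -
  have min_cross: "m x y * m z w \<le> K\<^sup>2 * (m x w * m y z)"
    if "m x z \<le> m y z" "m x z \<le> m x w" for x y z w
  proof -
    have "m x y \<le> K * m y z"
      using quasi_triangle[of x y z] that by (simp add: commute[of z y])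
    moreover have "m z w \<le> K * m x w"
      using quasi_triangle[of z w x] that by (simp add: commute[of z x])
    ultimately have "m x y * m z w \<le> (K * m y z) * (K * m x w)"
      using nonneg order_trans by (intro mult_mono) blast+
    then show ?thesis by (simp add: power2_eq_square ac_simps)
  qed
  let ?A = "m x z" and ?B = "m x w" and ?C = "m y z" and ?D = "m y w"
  have le_rhs: "K\<^sup>2 * (?B * ?C) \<le> K\<^sup>2 * max (?A * ?D) (?B * ?C)"
    "K\<^sup>2 * (?A * ?D) \<le> K\<^sup>2 * max (?A * ?D) (?B * ?C)"
    by (simp_all add: mult_left_mono)
  consider "?A \<le> ?B \<and> ?A \<le> ?C" | "?B \<le> ?A \<and> ?B \<le> ?D"
    | "?C \<le> ?A \<and> ?C \<le> ?D" | "?D \<le> ?B \<and> ?D \<le> ?C"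
    by linarith
  then show ?thesis
  proof cases
    case 1
    then show ?thesis using min_cross[of x z y w] le_rhs by (simp add: ac_simps)
  next
    case 2
    then show ?thesis using min_cross[of x w y z] le_rhs by (simp add: commute ac_simps)
  next
    case 3
    then show ?thesis using min_cross[of y z x w] le_rhs by (simp add: commute ac_simps)
  next
    case 4
    then show ?thesis using min_cross[of y w x z] le_rhs by (simp add: commute ac_simps)
  qed
qed

lemma mu_commute: "mu p x y = mu p y x"
  unfolding mu_def by (simp add: dist_commute mult.commute)

lemma mu_nonneg: "0 \<le> mu p x y"
  unfolding mu_def by simp

lemma sqrt_mult_le_add_sqrt_mult:
  fixes a b c v :: real
  assumes "0 \<le> a" "0 \<le> c" "0 \<le> v" "a \<le> b" "b \<le> c + v"
  shows "sqrt (a * b) \<le> v + sqrt (c * b)"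
proof (cases "b \<le> c")
  case True
  then have "sqrt (a * b) \<le> sqrt (c * b)"
    using assms by (intro real_sqrt_le_mono mult_right_mono) auto
  then show ?thesis using assms by linarith
next
  case False
  have "sqrt (a * b) \<le> sqrt (b * b)"
    using assms by (intro real_sqrt_le_mono mult_right_mono) auto
  also have "\<dots> = b" using assms by simp
  also have "b \<le> c + v" by fact
  also have "c = sqrt (c * c)" using assms by simp
  also have "sqrt (c * c) \<le> sqrt (c * b)"
    using assms False by (intro real_sqrt_le_mono mult_left_mono) auto
  finally show ?thesis by simp
qed

lemma mu_quasi_triangle: "mu p x y \<le> 3 * max (mu p x z) (mu p z y)"
proof -
  define a b c where "a = dist x p" and "b = dist y p" and "c = dist z p"
  define u v where "u = dist x z" and "v = dist z y"
  have nonneg: "0 \<le> a" "0 \<le> b" "0 \<le> c" "0 \<le> u" "0 \<le> v"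
    unfolding a_def b_def c_def u_def v_def by auto
  have a_le: "a \<le> c + u" and b_le: "b \<le> c + v"
    unfolding a_def b_def c_def u_def v_def
    by (metis add.commute dist_triangle dist_commute)+
  have sqrt_le: "sqrt (a * b) \<le> max (u + sqrt (a * c)) (v + sqrt (c * b))"
  proof (cases "a \<le> b")
    case True
    then show ?thesis
      using sqrt_mult_le_add_sqrt_mult[of a c v b] nonneg b_le by linarith
  next
    case False
    then have "sqrt (b * a) \<le> u + sqrt (c * a)"
      using sqrt_mult_le_add_sqrt_mult[of b c u a] nonneg a_le by linarith
    then show ?thesis by (simp add: mult.commute)
  qed
  have "mu p x y = dist x y + sqrt (a * b)"
    and "mu p x z = u + sqrt (a * c)" and "mu p z y = v + sqrt (c * b)"
    unfolding mu_def a_def b_def c_def u_def v_def by simp_all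
  moreover have "dist x y \<le> u + v"
    unfolding u_def v_def by (rule dist_triangle)
  moreover have "u \<le> max (mu p x z) (mu p z y)" "v \<le> max (mu p x z) (mu p z y)"
    using calculation nonneg
    by (simp_all add: le_max_iff_disj add_increasing2)
  ultimately show ?thesis
    using sqrt_le by linarith
qed

theorem lemma3p1:
  fixes p x y z w :: "'a::metric_space"
  shows "mu p x y * mu p z w \<le> 9 * max (mu p x z * mu p y w) (mu p x w * mu p y z)"
  using quasi_triangle_cross_product_le[of "mu p", OF mu_commute mu_nonneg mu_quasi_triangle]
  by simp

end
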